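(* Let $a<b$ be two $n$-bit integers. Then $\Pr[I(a,b,\vec e_{\mathsf a})]<\frac{8}{b-a}$.
   Context: Bits of $n$-bit integers are indexed $1$ (least significant) to $n$ (most significant). For an energy vector $\vec e=(e_1,\dots,e_n)$, an inexact comparison of $u,v$ reads each bit $j$ of $u$ and of $v$ independently, flipped with probability $2^{-e_j}$, and orders $u,v$ by the read values (the most significant bit at which the read values differ). $I(u,v,\vec e)$ is the event that this comparison gives the wrong order. $\vec e_{\mathsf a}=(1,2,\dots,n)$, i.e. bit $j$ gets energy $j$ and is flipped with probability $2^{-j}$. *)

theory Defs
  imports Complex_Main
begin

text \<open>Bits are indexed 1 (least significant) to n (most significant).
  Bit j of the natural number x.\<close>
definition bit_at :: "nat \<Rightarrow> nat \<Rightarrow> bool" where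
  "bit_at x j = odd (x div 2 ^ (j - 1))"

definition flip_prob :: "(nat \<Rightarrow> real) \<Rightarrow> nat \<Rightarrow> real" where
  "flip_prob e j = 2 powr (- e j)"

definition pattern_prob :: "nat \<Rightarrow> (nat \<Rightarrow> real) \<Rightarrow> nat set \<Rightarrow> real" where
  "pattern_prob n e S =
     (\<Prod>j\<in>{1..n}. if j \<in> S then flip_prob e j else 1 - flip_prob e j)"

definition read_val :: "nat \<Rightarrow> nat \<Rightarrow> nat set \<Rightarrow> nat" where
  "read_val n x S = (\<Sum>j\<in>{1..n}. if bit_at x j \<noteq> (j \<in> S) then 2 ^ (j - 1) else 0)"

text \<open>The inexact comparison of u and v gives the wrong order: it does not
  report the true strict order of u and v (read values equal count as wrong).\<close>
definition wrong_order :: "nat \<Rightarrow> nat \<Rightarrow> nat \<Rightarrow> nat set \<Rightarrow> nat set \<Rightarrow> bool" where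
  "wrong_order n u v S T =
     ((u < v \<and> \<not> read_val n u S < read_val n v T) \<or>
      (v < u \<and> \<not> read_val n v T < read_val n u S))"

definition prob_I :: "nat \<Rightarrow> nat \<Rightarrow> nat \<Rightarrow> (nat \<Rightarrow> real) \<Rightarrow> real" where
  "prob_I n u v e =
     (\<Sum>S\<in>Pow {1..n}. \<Sum>T\<in>Pow {1..n}.
        if wrong_order n u v S T then pattern_prob n e S * pattern_prob n e T else 0)"

definition e_a :: "nat \<Rightarrow> real" where
  "e_a j = real j"

end

theory Submission
  imports Defs
begin

text \<open>Choose \<open>k\<close> with \<open>2^k \<le> b - a < 2^(k+1)\<close>. If no bit of position \<open>\<ge> k\<close> is flipped in
  either operand, each read value is off by at most \<open>2^0 + \<dots> + 2^(k-2) < 2^(k-1)\<close>, so the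
  two errors together cannot bridge the gap \<open>b - a\<close> and the comparison is correct. Hence a
  wrong order requires a high flip in \<open>a\<close> or in \<open>b\<close>, and by the union bound its probability is at
  most \<open>2 (2^-k + 2^-(k+1) + \<dots>) < 4 \<cdot> 2^-k = 8 / 2^(k+1) < 8 / (b - a)\<close>.\<close>

definition bernoulli_subset_prob :: "'a set \<Rightarrow> ('a \<Rightarrow> real) \<Rightarrow> 'a set \<Rightarrow> real" where
  "bernoulli_subset_prob A p S = (\<Prod>i\<in>A. if i \<in> S then p i else 1 - p i)"

lemma pattern_prob_eq_bernoulli_subset_prob:
  "pattern_prob n e S = bernoulli_subset_prob {1..n} (flip_prob e) S"
  unfolding pattern_prob_def bernoulli_subset_prob_def ..

lemma bernoulli_subset_prob_split:
  assumes "finite A" "S \<subseteq> A"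
  shows "bernoulli_subset_prob A p S = (\<Prod>i\<in>S. p i) * (\<Prod>i\<in>A - S. 1 - p i)"
proof -
  have "A \<inter> S = S" "A \<inter> - S = A - S" using assms by auto
  then show ?thesis
    using prod.If_cases[of A "\<lambda>i. i \<in> S" p "\<lambda>i. 1 - p i"] assms(1)
    by (simp add: bernoulli_subset_prob_def)
qed

lemma bernoulli_subset_prob_nonneg:
  assumes "\<forall>i\<in>A. 0 \<le> p i \<and> p i \<le> 1"
  shows "0 \<le> bernoulli_subset_prob A p S"
  unfolding bernoulli_subset_prob_def using assms by (intro prod_nonneg) auto

lemma sum_bernoulli_subset_prob:
  assumes "finite A"
  shows "(\<Sum>S\<in>Pow A. bernoulli_subset_prob A p S) = 1"
proof -
  have "(\<Sum>S\<in>Pow A. bernoulli_subset_prob A p S)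
      = (\<Sum>S\<in>Pow A. (\<Prod>i\<in>S. p i) * (\<Prod>i\<in>A - S. 1 - p i))"
    using assms by (intro sum.cong) (auto simp: bernoulli_subset_prob_split)
  also have "\<dots> = (\<Prod>i\<in>A. p i + (1 - p i))"
    by (rule prod_add[OF assms, symmetric])
  finally show ?thesis by simp
qed

lemma sum_bernoulli_subset_prob_mem:
  assumes "finite A" "j \<in> A"
  shows "(\<Sum>S\<in>Pow A. if j \<in> S then bernoulli_subset_prob A p S else 0) = p j"
proof -
  \<comment> \<open>Setting the complementary factor at \<open>j\<close> to \<open>0\<close> kills exactly the subsets missing \<open>j\<close>.\<close>
  define q where "q i = (if i = j then 0 else 1 - p i)" for i
  have "(if j \<in> S then bernoulli_subset_prob A p S else 0) = (\<Prod>i\<in>S. p i) * (\<Prod>i\<in>A - S. q i)"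
    if "S \<in> Pow A" for S
  proof (cases "j \<in> S")
    case True
    then have "(\<Prod>i\<in>A - S. q i) = (\<Prod>i\<in>A - S. 1 - p i)"
      by (intro prod.cong) (auto simp: q_def)
    then show ?thesis using True that assms(1) by (simp add: bernoulli_subset_prob_split)
  next
    case False
    then have "(\<Prod>i\<in>A - S. q i) = 0"
      using assms by (intro prod_zero) (auto simp: q_def)
    then show ?thesis using False by simp
  qed
  then have "(\<Sum>S\<in>Pow A. if j \<in> S then bernoulli_subset_prob A p S else 0)
      = (\<Sum>S\<in>Pow A. (\<Prod>i\<in>S. p i) * (\<Prod>i\<in>A - S. q i))"
    by (intro sum.cong) auto
  also have "\<dots> = (\<Prod>i\<in>A. p i + q i)"
    by (rule prod_add[OF assms(1), symmetric])
  also have "\<dots> = (\<Prod>i\<in>A. if i = j then p j else 1)"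
    by (intro prod.cong) (auto simp: q_def)
  finally show ?thesis using assms by (simp add: prod.delta)
qed

lemma sum_bernoulli_subset_prob_hits_le:
  assumes "finite A" "\<forall>i\<in>A. 0 \<le> p i \<and> p i \<le> 1"
  shows "(\<Sum>S\<in>Pow A. if S \<inter> H \<noteq> {} then bernoulli_subset_prob A p S else 0) \<le> (\<Sum>j\<in>A \<inter> H. p j)"
proof -
  let ?w = "bernoulli_subset_prob A p"
  have "(if S \<inter> H \<noteq> {} then ?w S else 0) \<le> (\<Sum>j\<in>A \<inter> H. if j \<in> S then ?w S else 0)"
    if S: "S \<in> Pow A" for S
  proof (cases "S \<inter> H = {}")
    case True
    then show ?thesis using assms(2) by (simp add: sum_nonneg bernoulli_subset_prob_nonneg)
  next
    case False
    then obtain j where j: "j \<in> S" "j \<in> A \<inter> H"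
      using S by auto
    have "(if S \<inter> H \<noteq> {} then ?w S else 0) = (if j \<in> S then ?w S else 0)"
      using False j by simp
    also have "\<dots> \<le> (\<Sum>j\<in>A \<inter> H. if j \<in> S then ?w S else 0)"
      using assms by (intro member_le_sum j(2)) (auto intro: bernoulli_subset_prob_nonneg)
    finally show ?thesis .
  qed
  then have "(\<Sum>S\<in>Pow A. if S \<inter> H \<noteq> {} then ?w S else 0)
      \<le> (\<Sum>S\<in>Pow A. \<Sum>j\<in>A \<inter> H. if j \<in> S then ?w S else 0)"
    by (rule sum_mono)
  also have "\<dots> = (\<Sum>j\<in>A \<inter> H. p j)"
    using assms(1) by (subst sum.swap) (auto intro!: sum.cong sum_bernoulli_subset_prob_mem)
  finally show ?thesis .
qed

lemma sum_pairs_union_bound: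
  fixes w :: "'a \<Rightarrow> real"
  assumes "\<forall>x\<in>X. 0 \<le> w x" "(\<Sum>x\<in>X. w x) = 1"
    and "\<forall>x\<in>X. \<forall>y\<in>X. E x y \<longrightarrow> B x \<or> B y"
  shows "(\<Sum>x\<in>X. \<Sum>y\<in>X. if E x y then w x * w y else 0) \<le> 2 * (\<Sum>x\<in>X. if B x then w x else 0)"
proof -
  let ?b = "\<lambda>x. if B x then w x else 0"
  have "(\<Sum>x\<in>X. \<Sum>y\<in>X. if E x y then w x * w y else 0) \<le> (\<Sum>x\<in>X. \<Sum>y\<in>X. ?b x * w y + w x * ?b y)"
    using assms(1,3) by (intro sum_mono) auto
  also have "\<dots> = (\<Sum>x\<in>X. ?b x) * (\<Sum>y\<in>X. w y) + (\<Sum>x\<in>X. w x) * (\<Sum>y\<in>X. ?b y)"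
    by (simp add: sum.distrib sum_product)
  finally show ?thesis using assms(2) by simp
qed

lemma sum_bit_at_eq:
  "x < 2 ^ n \<Longrightarrow> (\<Sum>j\<in>{1..n}. if bit_at x j then 2 ^ (j - 1) else 0) = x"
proof (induction n arbitrary: x)
  case 0
  then show ?case by simp
next
  case (Suc n)
  have "(if bit_at x (Suc j) then 2 ^ j else 0) = 2 * (if bit_at (x div 2) j then 2 ^ (j - 1) else (0::nat))"
    if "j \<in> {1..n}" for j
    using that by (cases j) (simp_all add: bit_at_def div_mult2_eq)
  then have "(\<Sum>j\<in>{1..n}. if bit_at x (Suc j) then 2 ^ j else 0)
      = 2 * (\<Sum>j\<in>{1..n}. if bit_at (x div 2) j then 2 ^ (j - 1) else (0::nat))"
    by (simp add: sum_distrib_left)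
  also have "\<dots> = 2 * (x div 2)"
    using Suc by simp
  finally have high_bits: "(\<Sum>j\<in>{1..n}. if bit_at x (Suc j) then 2 ^ j else 0) = 2 * (x div 2)" .
  have "(\<Sum>j\<in>{1..Suc n}. if bit_at x j then 2 ^ (j - 1) else 0)
      = (if bit_at x 1 then 1 else 0) + (\<Sum>j\<in>{Suc 1..Suc n}. if bit_at x j then 2 ^ (j - 1) else (0::nat))"
    by (subst sum.atLeast_Suc_atMost) auto
  also have "(\<Sum>j\<in>{Suc 1..Suc n}. if bit_at x j then 2 ^ (j - 1) else (0::nat))
      = (\<Sum>j\<in>{1..n}. if bit_at x (Suc j) then 2 ^ j else 0)"
    by (subst sum.shift_bounds_cl_Suc_ivl) (rule sum.cong; simp)
  also have "(if bit_at x 1 then 1 else 0) = x mod 2"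
    by (simp add: bit_at_def odd_iff_mod_2_eq_one)
  finally show ?case
    by (simp only: high_bits mod_mult_div_eq)
qed

lemma read_val_diff_le:
  assumes "x < 2 ^ n"
  shows "\<bar>int (read_val n x S) - int x\<bar> \<le> (\<Sum>j\<in>{1..n} \<inter> S. 2 ^ (j - 1))"
proof -
  have "int (read_val n x S) - int x
      = (\<Sum>j\<in>{1..n}. (if bit_at x j \<noteq> (j \<in> S) then 2 ^ (j - 1) else 0)
                      - (if bit_at x j then 2 ^ (j - 1) else 0))"
    unfolding read_val_def
    by (subst (2) sum_bit_at_eq[OF assms, symmetric], unfold of_nat_sum sum_subtractf[symmetric])
      (intro sum.cong, auto)
  also have "\<bar>\<dots>\<bar> \<le> (\<Sum>j\<in>{1..n}. if j \<in> S then 2 ^ (j - 1) else 0)"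
    by (rule order_trans[OF sum_abs sum_mono]) auto
  finally show ?thesis by (simp only: sum.inter_restrict[OF finite_atLeastAtMost])
qed

lemma two_mult_sum_powers_less: "2 * (\<Sum>j\<in>{1..<k}. (2::int) ^ (j - 1)) < 2 ^ k"
proof (induction k)
  case 0
  then show ?case by simp
next
  case (Suc k)
  then show ?case
    by (cases k) (simp_all add: sum.atLeastLessThan_Suc)
qed

lemma read_val_diff_less_if_high_unflipped:
  assumes "x < 2 ^ n" "S \<inter> {k..} = {}"
  shows "2 * \<bar>int (read_val n x S) - int x\<bar> < 2 ^ k"
proof -
  have "(\<Sum>j\<in>{1..n} \<inter> S. (2::int) ^ (j - 1)) \<le> (\<Sum>j\<in>{1..<k}. 2 ^ (j - 1))"
    using assms(2) by (intro sum_mono2) auto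
  with read_val_diff_le[OF assms(1)]
  have "\<bar>int (read_val n x S) - int x\<bar> \<le> (\<Sum>j\<in>{1..<k}. 2 ^ (j - 1))"
    by (rule order_trans)
  then have "2 * \<bar>int (read_val n x S) - int x\<bar> \<le> 2 * (\<Sum>j\<in>{1..<k}. 2 ^ (j - 1))"
    by simp
  then show ?thesis
    using two_mult_sum_powers_less[of k] by (rule le_less_trans)
qed

lemma not_wrong_order_if_high_unflipped:
  assumes "a < 2 ^ n" "b < 2 ^ n" "a < b" "2 ^ k \<le> b - a"
    and "S \<inter> {k..} = {}" "T \<inter> {k..} = {}"
  shows "\<not> wrong_order n a b S T"
proof -
  have separated: "u < v"
    if "d \<le> b' - a'" "2 * \<bar>u - a'\<bar> < d" "2 * \<bar>v - b'\<bar> < d" for u v a' b' d :: int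
    using that by arith
  have "(2::int) ^ k \<le> int b - int a"
    using assms(3,4) by (simp flip: of_nat_diff of_nat_le_iff)
  then have "int (read_val n a S) < int (read_val n b T)"
    using read_val_diff_less_if_high_unflipped[OF assms(1,5)]
      read_val_diff_less_if_high_unflipped[OF assms(2,6)]
    by (rule separated)
  then show ?thesis using assms(3) by (simp add: wrong_order_def)
qed

lemma flip_prob_bounds:
  assumes "0 \<le> e j"
  shows "0 \<le> flip_prob e j" "flip_prob e j \<le> 1"
  using assms powr_mono[of "- e j" 0 2] by (simp_all add: flip_prob_def)

lemma prob_I_le_high_flip_prob:
  assumes "a < 2 ^ n" "b < 2 ^ n" "a < b" "2 ^ k \<le> b - a" "\<forall>j. 0 \<le> e j"
  shows "prob_I n a b e \<le> 2 * (\<Sum>j\<in>{1..n} \<inter> {k..}. flip_prob e j)"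
proof -
  let ?w = "bernoulli_subset_prob {1..n} (flip_prob e)"
  have p_bounds: "\<forall>j\<in>{1..n}. 0 \<le> flip_prob e j \<and> flip_prob e j \<le> 1"
    using assms(5) flip_prob_bounds by blast
  have "prob_I n a b e = (\<Sum>S\<in>Pow {1..n}. \<Sum>T\<in>Pow {1..n}.
      if wrong_order n a b S T then ?w S * ?w T else 0)"
    unfolding prob_I_def pattern_prob_eq_bernoulli_subset_prob ..
  also have "\<dots> \<le> 2 * (\<Sum>S\<in>Pow {1..n}. if S \<inter> {k..} \<noteq> {} then ?w S else 0)"
    using not_wrong_order_if_high_unflipped[OF assms(1-4)] p_bounds
    by (intro sum_pairs_union_bound) (auto simp: bernoulli_subset_prob_nonneg sum_bernoulli_subset_prob)
  also have "\<dots> \<le> 2 * (\<Sum>j\<in>{1..n} \<inter> {k..}. flip_prob e j)"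
    using p_bounds by (intro mult_left_mono sum_bernoulli_subset_prob_hits_le) simp_all
  finally show ?thesis .
qed

lemma flip_prob_e_a: "flip_prob e_a j = (1 / 2) ^ j"
  by (simp add: flip_prob_def e_a_def powr_minus powr_realpow power_one_over inverse_eq_divide)

lemma sum_half_powers_tail_less: "(\<Sum>j\<in>{1..n} \<inter> {k..}. (1 / 2 :: real) ^ j) < 2 * (1 / 2) ^ k"
proof (cases "k \<le> n")
  case True
  have "(\<Sum>j\<in>{1..n} \<inter> {k..}. (1 / 2 :: real) ^ j) \<le> (\<Sum>j\<in>{k..n}. (1 / 2) ^ j)"
    by (intro sum_mono2) auto
  also have "\<dots> = 2 * ((1 / 2) ^ k - (1 / 2) ^ Suc n)"
    using sum_gp_multiplied[OF True, of "1 / 2 :: real"] by simp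
  also have "\<dots> < 2 * (1 / 2) ^ k"
    by simp
  finally show ?thesis .
next
  case False
  then have "{1..n} \<inter> {k..} = {}" by auto
  then show ?thesis by simp
qed

theorem lemma3:
  fixes n a b :: nat
  assumes "a < 2 ^ n" and "b < 2 ^ n" and "a < b"
  shows "prob_I n a b e_a < 8 / (real b - real a)"
proof -
  have "1 \<le> b - a"
    using assms(3) by simp
  then obtain k where k: "2 ^ k \<le> b - a" "b - a < 2 ^ (k + 1)"
    using ex_power_ivl1[of 2 "b - a"] by auto
  have "prob_I n a b e_a \<le> 2 * (\<Sum>j\<in>{1..n} \<inter> {k..}. flip_prob e_a j)"
    by (rule prob_I_le_high_flip_prob[OF assms k(1)]) (simp add: e_a_def)
  also have "\<dots> = 2 * (\<Sum>j\<in>{1..n} \<inter> {k..}. (1 / 2) ^ j)"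
    by (simp only: flip_prob_e_a)
  also have "\<dots> < 8 / 2 ^ (k + 1)"
    using sum_half_powers_tail_less[of n k] by (simp add: power_one_over)
  also have "\<dots> < 8 / (real b - real a)"
  proof -
    have "real b - real a = real (b - a)"
      using assms(3) by simp
    also have "\<dots> < 2 ^ (k + 1)"
      using k(2) by (metis of_nat_less_iff of_nat_numeral of_nat_power)
    finally show ?thesis using assms(3) by (intro divide_strict_left_mono) auto
  qed
  finally show ?thesis .
qed

end
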